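(* Let $1\le s<n$, $s^*=sn/(n-s)$, $0\le h\in L^s_{loc}(\mathbb R^n)$ and let $(\gamma_k)_{k\ge0}$ be nonnegative numbers. Define $a(Q)=\sum_{k=0}^\infty\gamma_k\,\ell(2^kQ)(\fint_{2^kQ}h^s\,dx)^{1/s}$. For every $1\le q<s^*$ there is $C$ such that for every cube $Q$ and every family $\{Q_i\}$ of pairwise disjoint cubes contained in $Q$, $$\sum_ia(Q_i)^q|Q_i|\le C^q\,\bar a(Q)^q|Q|,$$ where $\bar a(Q)=\sum_{k\ge0}\bar\gamma_k\,\ell(2^kQ)(\fint_{2^kQ}h^s\,dx)^{1/s}$, $\bar\gamma_0=C\gamma_0$ and $\bar\gamma_k=2^{-kn(\frac1s-\frac1q)^+}\sum_{l=k-1}^\infty\gamma_l\,2^{ln(\frac1s-\frac1q)^+}$ for $k\ge1$.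
   Context: Cubes $Q=\prod_i[a_i,a_i+\ell(Q))$; $2^kQ$ is the concentric cube of sidelength $2^k\ell(Q)$; $\fint_Eg=|E|^{-1}\int_Eg$; $t^+=\max(t,0)$. *)

theory Defs
  imports "HOL-Analysis.Analysis"
begin

definition cube :: "real^'n \<Rightarrow> real \<Rightarrow> (real^'n) set" where
  "cube a l = {x. \<forall>i. a$i \<le> x$i \<and> x$i < a$i + l}"

text \<open>Lower corner of the concentric cube 2^k Q (sidelength 2^k l).\<close>
definition dil_corner :: "real^'n \<Rightarrow> real \<Rightarrow> nat \<Rightarrow> real^'n" where
  "dil_corner a l k = (\<chi> i. a$i - (2^k - 1) * l / 2)"

definition avg :: "(real^'n) set \<Rightarrow> (real^'n \<Rightarrow> real) \<Rightarrow> real" where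
  "avg E g = (LINT x:E|lebesgue. g x) / measure lebesgue E"

definition epow :: "ennreal \<Rightarrow> real \<Rightarrow> ennreal" where
  "epow x p = (if x = \<infinity> then \<infinity> else ennreal (enn2real x powr p))"

definition aQ :: "(nat \<Rightarrow> ennreal) \<Rightarrow> (real^'n \<Rightarrow> real) \<Rightarrow> real \<Rightarrow> real^'n \<Rightarrow> real \<Rightarrow> ennreal" where
  "aQ g h s a l = (\<Sum>k. g k * ennreal (2^k * l *
      (avg (cube (dil_corner a l k) (2^k * l)) (\<lambda>x. h x powr s)) powr (1/s)))"

definition gbar :: "real \<Rightarrow> nat \<Rightarrow> real \<Rightarrow> real \<Rightarrow> (nat \<Rightarrow> real) \<Rightarrow> nat \<Rightarrow> ennreal" where
  "gbar C n s q \<gamma> k =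
     (if k = 0 then ennreal (C * \<gamma> 0)
      else ennreal (2 powr (- real k * real n * max (1/s - 1/q) 0)) *
           (\<Sum>j. ennreal (\<gamma> (j + (k - 1)) * 2 powr (real (j + (k - 1)) * real n * max (1/s - 1/q) 0))))"

end

theory Submission
  imports Defs
begin

text \<open>
  Write a(Q) = sum_k gamma_k A_k(Q), where A_k(Q) = l(2^k Q)^(1 - n/s) (int_{2^k Q} h^s)^(1/s)
  is the unweighted k-th term. For a subcube Q_i of Q let m_i = floor (log2 (l(Q)/l(Q_i))) be
  its dyadic scale, so that 2^m_i l(Q_i) <= l(Q) < 2^(m_i+1) l(Q_i).

  Far terms (k > m_i): 2^k Q_i lies in the comparable cube 2^(k-m_i+1) Q, hence
  gamma_k A_k(Q_i) <= c bar_gamma_(k-m_i+1) A_(k-m_i+1)(Q), and the far part of a(Q_i)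
  is at most c bar_a(Q), uniformly in i.

  Near terms (k <= m_i): Jensen's inequality with the weights gamma_k 2^(k n e),
  e = (1/s - 1/q)^+, reduces everything to sum_{i : m_i >= k} A_k(Q_i)^q |Q_i| <=
  K 2^(k q n e) A_1(Q)^q |Q|. For this the cubes are grouped by scale m: there are at most
  2^((m+1) n) of them, their k-fold dilates overlap at most 2^((k+2) n) times inside 2Q, and
  the contributions of the groups decay geometrically in m precisely because q < s^*.
\<close>

section \<open>Elementary inequalities\<close>

lemma weighted_power_mean_pos:
  fixes w y :: "'i \<Rightarrow> real"
  assumes "finite A" "A \<noteq> {}" "\<And>i. i \<in> A \<Longrightarrow> 0 < w i" "\<And>i. i \<in> A \<Longrightarrow> 0 < y i" "1 \<le> p"
  shows "(\<Sum>i\<in>A. w i * y i) powr p \<le> (\<Sum>i\<in>A. w i) powr (p - 1) * (\<Sum>i\<in>A. w i * y i powr p)"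
proof -
  define W where "W = (\<Sum>i\<in>A. w i)"
  have W: "0 < W" unfolding W_def using assms by (intro sum_pos) auto
  have "(\<lambda>x. x powr p) (\<Sum>i\<in>A. (w i / W) *\<^sub>R y i) \<le> (\<Sum>i\<in>A. (w i / W) * (\<lambda>x. x powr p) (y i))"
    by (rule convex_on_sum[OF assms(1,2) powr_convex[OF assms(5)]])
       (use assms W in \<open>auto simp: W_def sum_divide_distrib[symmetric] zero_le_divide_iff less_imp_le\<close>)
  then have "((\<Sum>i\<in>A. w i * y i) / W) powr p \<le> (\<Sum>i\<in>A. w i * y i powr p) / W"
    by (simp add: sum_divide_distrib[symmetric] sum_distrib_left)
  then have "(\<Sum>i\<in>A. w i * y i) powr p / W powr p \<le> (\<Sum>i\<in>A. w i * y i powr p) / W"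
    using W assms by (subst powr_divide[symmetric]) (auto intro!: sum_nonneg)
  then have "(\<Sum>i\<in>A. w i * y i) powr p \<le> (\<Sum>i\<in>A. w i * y i powr p) / W * W powr p"
    using W by (simp add: divide_le_eq)
  also have "\<dots> = W powr (p - 1) * (\<Sum>i\<in>A. w i * y i powr p)"
    using W by (simp add: powr_diff field_simps)
  finally show ?thesis by (simp add: W_def)
qed

lemma weighted_power_mean:
  fixes w y :: "'i \<Rightarrow> real"
  assumes "finite A" "\<And>i. i \<in> A \<Longrightarrow> 0 \<le> w i" "\<And>i. i \<in> A \<Longrightarrow> 0 \<le> y i" "1 \<le> p"
    and W: "(\<Sum>i\<in>A. w i) \<le> W"
  shows "(\<Sum>i\<in>A. w i * y i) powr p \<le> W powr (p - 1) * (\<Sum>i\<in>A. w i * y i powr p)"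
proof -
  define A' where "A' = {i\<in>A. 0 < w i \<and> 0 < y i}"
  have A'A: "A' \<subseteq> A" by (auto simp: A'_def)
  have fA': "finite A'" using assms(1) A'A by (rule finite_subset[rotated])
  have s1: "(\<Sum>i\<in>A. w i * y i) = (\<Sum>i\<in>A'. w i * y i)"
    using assms(1) A'A assms(2,3) by (intro sum.mono_neutral_right) (auto simp: A'_def less_le)
  have s2: "(\<Sum>i\<in>A. w i * y i powr p) = (\<Sum>i\<in>A'. w i * y i powr p)"
    using assms(1) A'A assms(2,3,4) by (intro sum.mono_neutral_right) (auto simp: A'_def less_le)
  have WA': "(\<Sum>i\<in>A'. w i) \<le> W"
    using assms(1,2) A'A W by (meson order.trans sum_mono2 Diff_iff)
  show ?thesis
  proof (cases "A' = {}")
    case True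
    then show ?thesis using s1 assms by (auto intro!: mult_nonneg_nonneg sum_nonneg)
  next
    case False
    have "(\<Sum>i\<in>A'. w i * y i) powr p \<le> (\<Sum>i\<in>A'. w i) powr (p - 1) * (\<Sum>i\<in>A'. w i * y i powr p)"
      by (rule weighted_power_mean_pos[OF fA' False _ _ assms(4)]) (auto simp: A'_def)
    also have "\<dots> \<le> W powr (p - 1) * (\<Sum>i\<in>A'. w i * y i powr p)"
      using A'A assms(2,4) WA' by (intro mult_right_mono powr_mono2 sum_nonneg) auto
    finally show ?thesis using s1 s2 by simp
  qed
qed

lemma power_mean_exp_weights:
  fixes \<gamma> a :: "nat \<Rightarrow> real"
  assumes "finite A" "\<And>k. 0 \<le> \<gamma> k" "\<And>k. 0 \<le> a k" "1 \<le> q"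
    and W: "(\<Sum>k\<in>A. \<gamma> k * 2 powr (real k * t)) \<le> W"
  shows "(\<Sum>k\<in>A. \<gamma> k * a k) powr q
     \<le> W powr (q - 1) * (\<Sum>k\<in>A. \<gamma> k * 2 powr (real k * t) * 2 powr (- (real k * q * t)) * a k powr q)"
proof -
  define w where "w k = \<gamma> k * 2 powr (real k * t)" for k
  define y where "y k = 2 powr (- (real k * t)) * a k" for k
  have "(\<Sum>k\<in>A. \<gamma> k * a k) = (\<Sum>k\<in>A. w k * y k)"
    by (intro sum.cong refl) (simp add: w_def y_def powr_minus field_simps)
  also have "\<dots> powr q \<le> W powr (q - 1) * (\<Sum>k\<in>A. w k * y k powr q)"
    using assms by (intro weighted_power_mean) (auto simp: w_def y_def)
  also have "(\<Sum>k\<in>A. w k * y k powr q) = (\<Sum>k\<in>A. w k * 2 powr (- (real k * q * t)) * a k powr q)"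
    by (intro sum.cong refl) (simp add: y_def powr_mult powr_powr mult_ac)
  finally show ?thesis by (simp add: w_def)
qed

lemma sum_powr_le_powr_sum:
  fixes x :: "'i \<Rightarrow> real"
  assumes "finite A" "\<And>i. i \<in> A \<Longrightarrow> 0 \<le> x i" "1 \<le> p"
  shows "(\<Sum>i\<in>A. x i powr p) \<le> (\<Sum>i\<in>A. x i) powr p"
proof -
  define X where "X = (\<Sum>i\<in>A. x i)"
  have X0: "0 \<le> X" unfolding X_def using assms by (intro sum_nonneg) auto
  have "x i powr p \<le> x i * X powr (p - 1)" if i: "i \<in> A" for i
  proof (cases "x i = 0")
    case True then show ?thesis using assms(3) by simp
  next
    case False
    then have pos: "0 < x i" using assms(2) i by (simp add: less_le)
    have xi: "x i \<le> X" unfolding X_def using assms i by (intro member_le_sum) auto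
    have "x i powr p = x i * x i powr (p - 1)" using pos by (simp add: powr_diff field_simps)
    also have "\<dots> \<le> x i * X powr (p - 1)"
      using pos xi assms(3) by (intro mult_left_mono powr_mono2) auto
    finally show ?thesis .
  qed
  then have "(\<Sum>i\<in>A. x i powr p) \<le> X * X powr (p - 1)"
    by (simp add: X_def sum_distrib_right sum_mono)
  also have "X * X powr (p - 1) = X powr p"
    using X0 assms(3) by (cases "X = 0") (simp_all add: powr_diff field_simps)
  finally show ?thesis by (simp add: X_def)
qed

lemma sum_powr_le_card_powr_sum:
  fixes x :: "'i \<Rightarrow> real"
  assumes "finite A" "\<And>i. i \<in> A \<Longrightarrow> 0 \<le> x i" "0 < p" "p \<le> 1"
  shows "(\<Sum>i\<in>A. x i powr p) \<le> real (card A) powr (1 - p) * (\<Sum>i\<in>A. x i) powr p"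
proof -
  define S where "S = (\<Sum>i\<in>A. x i powr p)"
  have S0: "0 \<le> S" unfolding S_def by (intro sum_nonneg) auto
  have "S powr (1/p) \<le> real (card A) powr (1/p - 1) * (\<Sum>i\<in>A. 1 * (x i powr p) powr (1/p))"
    using weighted_power_mean[of A "\<lambda>_. 1" "\<lambda>i. x i powr p" "1/p" "real (card A)"] assms
    by (simp add: S_def field_simps)
  also have "(\<Sum>i\<in>A. 1 * (x i powr p) powr (1/p)) = (\<Sum>i\<in>A. x i)"
    using assms by (intro sum.cong refl) (auto simp: powr_powr)
  finally have "(S powr (1/p)) powr p \<le> (real (card A) powr (1/p - 1) * (\<Sum>i\<in>A. x i)) powr p"
    using assms S0 by (intro powr_mono2) auto
  also have "\<dots> = real (card A) powr ((1/p - 1) * p) * (\<Sum>i\<in>A. x i) powr p"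
    using assms by (simp add: powr_mult powr_powr sum_nonneg)
  also have "(1/p - 1) * p = 1 - p" using assms(3) by (simp add: field_simps)
  finally show ?thesis using S0 assms by (simp add: powr_powr S_def)
qed

lemma sum_powr_le_card:
  fixes x :: "'i \<Rightarrow> real"
  assumes "finite A" "\<And>i. i \<in> A \<Longrightarrow> 0 \<le> x i" "0 < p"
  shows "(\<Sum>i\<in>A. x i powr p) \<le> real (card A) powr (max (1 - p) 0) * (\<Sum>i\<in>A. x i) powr p"
proof (cases "A = {}")
  case False
  then have c: "1 \<le> real (card A)" using assms(1) by (simp add: Suc_le_eq card_gt_0_iff)
  show ?thesis
  proof (cases "p \<le> 1")
    case True then show ?thesis using sum_powr_le_card_powr_sum[OF assms True] by simp
  next
    case False then show ?thesis using sum_powr_le_powr_sum[OF assms(1,2), where p=p] c by simp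
  qed
qed simp

lemma powr_add_le:
  fixes x y q :: real
  assumes "0 \<le> x" "0 \<le> y" "1 \<le> q"
  shows "(x + y) powr q \<le> 2 powr q * (x powr q + y powr q)"
proof -
  have "(x + y) powr q \<le> (2 * max x y) powr q"
    using assms by (intro powr_mono2) auto
  also have "\<dots> = 2 powr q * max x y powr q" using assms by (simp add: powr_mult)
  also have "max x y powr q \<le> x powr q + y powr q"
    by (cases "x \<le> y") (auto simp: max_def)
  then have "2 powr q * max x y powr q \<le> 2 powr q * (x powr q + y powr q)"
    by (intro mult_left_mono) auto
  finally show ?thesis .
qed

lemma geometric_sum_le:
  fixes x :: real
  assumes "0 \<le> x" "x < 1"
  shows "(\<Sum>m\<in>{k..M}. x ^ m) \<le> x ^ k / (1 - x)"
proof -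
  have "(\<Sum>m\<in>{k..M}. x ^ m) \<le> (\<Sum>m\<in>{k..max k M}. x ^ m)"
    using assms by (intro sum_mono2) auto
  also have "\<dots> = (x ^ k - x ^ Suc (max k M)) / (1 - x)"
    using sum_gp_multiplied[of k "max k M" x] assms by (simp add: field_simps)
  also have "\<dots> \<le> x ^ k / (1 - x)" using assms by (intro divide_right_mono) auto
  finally show ?thesis .
qed

lemma grouped_geometric_sum:
  fixes f :: "'i \<Rightarrow> real" and g :: "'i \<Rightarrow> nat"
  assumes "finite S" "g ` S \<subseteq> {k..M}" "0 \<le> B" "0 \<le> x" "x < 1"
    and group: "\<And>m. m \<in> {k..M} \<Longrightarrow> (\<Sum>i\<in>{i\<in>S. g i = m}. f i) \<le> B * x ^ m"
  shows "(\<Sum>i\<in>S. f i) \<le> B * (x ^ k / (1 - x))"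
proof -
  have "(\<Sum>i\<in>S. f i) = (\<Sum>m\<in>{k..M}. \<Sum>i\<in>{i\<in>S. g i = m}. f i)"
    using assms(1,2) by (intro sum.group[symmetric]) auto
  also have "\<dots> \<le> (\<Sum>m\<in>{k..M}. B * x ^ m)"
    using group by (rule sum_mono)
  also have "\<dots> = B * (\<Sum>m\<in>{k..M}. x ^ m)"
    by (rule sum_distrib_left[symmetric])
  also have "\<dots> \<le> B * (x ^ k / (1 - x))"
    using assms(3-5) by (intro mult_left_mono geometric_sum_le)
  finally show ?thesis .
qed

lemma sum_swap_atMost:
  fixes g :: "'i \<Rightarrow> nat \<Rightarrow> real"
  assumes "finite F" "\<And>i. i \<in> F \<Longrightarrow> m i \<le> M"
  shows "(\<Sum>i\<in>F. \<Sum>k\<le>m i. g i k) = (\<Sum>k\<le>M. \<Sum>i\<in>{i\<in>F. k \<le> m i}. g i k)"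
proof -
  have "{..m i} = {k\<in>{..M}. k \<le> m i}" if "i \<in> F" for i
    using assms(2)[OF that] by auto
  then have "(\<Sum>i\<in>F. \<Sum>k\<le>m i. g i k) = (\<Sum>i\<in>F. \<Sum>k\<in>{k\<in>{..M}. k \<le> m i}. g i k)"
    by (intro sum.cong refl) auto
  also have "\<dots> = (\<Sum>k\<le>M. \<Sum>i\<in>{i\<in>F. k \<le> m i}. g i k)"
    using assms(1) by (intro sum.swap_restrict) auto
  finally show ?thesis .
qed

lemma ennreal_le_suminf_term: "f t \<le> (\<Sum>i. f i :: ennreal)"
  using sum_le_suminf[of f "{t}"] by simp

lemma epow_ennreal: "0 \<le> y \<Longrightarrow> epow (ennreal y) q = ennreal (y powr q)"
  by (simp add: epow_def)

lemma epow_le: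
  assumes "x \<le> ennreal y" "0 \<le> y" "0 < q"
  shows "epow x q \<le> ennreal (y powr q)"
proof (cases x rule: ennreal_cases)
  case (real r)
  then show ?thesis using assms by (simp add: epow_def powr_mono2 ennreal_leI)
next
  case top then show ?thesis using assms(1) by (simp add: top_unique)
qed


section \<open>Cubes and their dilates\<close>

lemma cube_borel: "cube (a::real^'n) l \<in> sets borel"
proof -
  have "cube a l = (\<Inter>i. {x. a$i \<le> x$i}) \<inter> (\<Inter>i. {x. x$i < a$i + l})"
    by (auto simp: cube_def)
  moreover have "(\<Inter>i. {x::real^'n. a$i \<le> x$i}) \<in> sets borel"
    by (intro borel_closed closed_INT ballI closed_halfspace_component_ge_cart)
  moreover have "(\<Inter>i. {x::real^'n. x$i < a$i + l}) \<in> sets borel"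
    by (intro borel_open open_INT ballI open_halfspace_component_lt_cart) auto
  ultimately show ?thesis by auto
qed

lemma cube_lebesgue[measurable]: "cube (a::real^'n) l \<in> sets lebesgue"
  using cube_borel[of a l] by (metis sets_lborel sets_completionI_sets)

text \<open>A half-open cube lies between the open and the closed box with the same corners, and
  both of these have volume l^n.\<close>
lemma emeasure_cube:
  assumes "0 \<le> l"
  shows "emeasure lebesgue (cube (a::real^'n) l) = ennreal (l ^ CARD('n))"
proof -
  define b :: "real^'n" where "b = a + (\<chi> i. l)"
  have sub: "box a b \<subseteq> cube a l" "cube a l \<subseteq> cbox a b"
    by (force simp: b_def cube_def mem_box_cart less_imp_le)+
  have "a \<in> cbox a b" using assms by (simp add: b_def mem_box_cart)
  then have c: "measure lborel (cbox a b) = l ^ CARD('n)"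
    using content_cbox_cart[of a b] by (auto simp: b_def)
  then have b: "measure lborel (box a b) = l ^ CARD('n)"
    by (simp only: measure_lborel_box_eq measure_lborel_cbox_eq)
  have "emeasure lborel (cube a l) \<le> ennreal (l ^ CARD('n))"
    using emeasure_mono[OF sub(2), of lborel] c emeasure_lborel_cbox_finite[of a b]
    by (simp add: emeasure_eq_ennreal_measure less_top)
  moreover have "ennreal (l ^ CARD('n)) \<le> emeasure lborel (cube a l)"
    using emeasure_mono[OF sub(1), of lborel] b emeasure_lborel_box_finite[of a b] cube_borel[of a l]
    by (simp add: emeasure_eq_ennreal_measure less_top)
  ultimately show ?thesis using cube_borel[of a l] by simp
qed

lemma measure_cube: "0 \<le> l \<Longrightarrow> measure lebesgue (cube (a::real^'n) l) = l ^ CARD('n)"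
  by (simp only: measure_def emeasure_cube) simp

lemma cube_fmeasurable: "0 \<le> l \<Longrightarrow> cube (a::real^'n) l \<in> fmeasurable lebesgue"
  by (rule fmeasurableI[OF cube_lebesgue]) (subst emeasure_cube, auto)

lemma subcube_coords:
  assumes "cube (b::real^'n) r \<subseteq> cube a l" "0 < r"
  shows "a$i \<le> b$i \<and> b$i + r \<le> a$i + l"
proof
  have "b \<in> cube b r" using assms(2) by (simp add: cube_def)
  then show "a$i \<le> b$i" using assms(1) by (auto simp: cube_def)
  show "b$i + r \<le> a$i + l"
  proof (rule ccontr)
    assume nt: "\<not> b$i + r \<le> a$i + l"
    define y where "y = (\<chi> j. if j = i then max (b$i) (a$i + l) else b$j)"
    have "y \<in> cube b r" using assms(2) nt by (auto simp: cube_def y_def)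
    moreover have "y \<notin> cube a l" by (auto simp: cube_def y_def intro!: exI[of _ i])
    ultimately show False using assms(1) by blast
  qed
qed

lemma subcube_of_coords:
  assumes "\<And>i. a$i \<le> b$i \<and> b$i + r \<le> a$i + l"
  shows "cube (b::real^'n) r \<subseteq> cube a l"
  using assms by (fastforce simp: cube_def intro: order_trans less_le_trans)

lemma subcube_side_le:
  assumes "cube (b::real^'n) r \<subseteq> cube a l" "0 < r"
  shows "r \<le> l"
  using subcube_coords[OF assms, of undefined] by linarith

lemma disjoint_subcubes_volume:
  fixes c :: "real^'n"
  assumes fin: "finite G" and pos: "\<And>P. P \<in> G \<Longrightarrow> 0 < snd P"
    and sub: "\<And>P. P \<in> G \<Longrightarrow> cube (fst P) (snd P) \<subseteq> cube c L"
    and disj: "\<And>P P'. P \<in> G \<Longrightarrow> P' \<in> G \<Longrightarrow> P \<noteq> P' \<Longrightarrow>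
                 cube (fst P) (snd P) \<inter> cube (fst P') (snd P') = {}"
    and L: "0 \<le> L"
  shows "(\<Sum>P\<in>G. snd P ^ CARD('n)) \<le> L ^ CARD('n)"
proof -
  have "(\<Sum>P\<in>G. snd P ^ CARD('n)) = (\<Sum>P\<in>G. measure lebesgue (cube (fst P) (snd P)))"
    using pos by (intro sum.cong) (auto simp: measure_cube less_imp_le)
  also have "\<dots> = measure lebesgue (\<Union>P\<in>G. cube (fst P) (snd P))"
  proof (rule measure_finite_Union[symmetric])
    show "disjoint_family_on (\<lambda>P. cube (fst P) (snd P)) G"
      using disj by (auto simp: disjoint_family_on_def)
    show "emeasure lebesgue (cube (fst P) (snd P)) \<noteq> \<infinity>" if "P \<in> G" for P
      using pos[OF that] by (subst emeasure_cube) auto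
  qed (use fin in auto)
  also have "\<dots> \<le> measure lebesgue (cube c L)"
    using sub fin by (intro measure_mono_fmeasurable cube_fmeasurable L) auto
  also have "\<dots> = L ^ CARD('n)" using L by (rule measure_cube)
  finally show ?thesis .
qed

lemma disjoint_subcubes_card:
  fixes c :: "real^'n"
  assumes "finite G" "\<And>P. P \<in> G \<Longrightarrow> t \<le> snd P \<and> cube (fst P) (snd P) \<subseteq> cube c (K * t)"
    "\<And>P P'. P \<in> G \<Longrightarrow> P' \<in> G \<Longrightarrow> P \<noteq> P' \<Longrightarrow>
       cube (fst P) (snd P) \<inter> cube (fst P') (snd P') = {}"
    "0 < t" "0 \<le> K"
  shows "real (card G) \<le> K ^ CARD('n)"
proof -
  have "real (card G) * t ^ CARD('n) = (\<Sum>P\<in>G. t ^ CARD('n))" by simp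
  also have "\<dots> \<le> (\<Sum>P\<in>G. snd P ^ CARD('n))"
    using assms(2,4) by (intro sum_mono power_mono) (auto simp: less_imp_le)
  also have "\<dots> \<le> (K * t) ^ CARD('n)"
    using assms by (intro disjoint_subcubes_volume) (auto intro: less_le_trans)
  also have "\<dots> = K ^ CARD('n) * t ^ CARD('n)" by (rule power_mult_distrib)
  finally show ?thesis using assms(4) by simp
qed

definition dil :: "real^'n \<Rightarrow> real \<Rightarrow> nat \<Rightarrow> (real^'n) set" where
  "dil b r k = cube (dil_corner b r k) (2^k * r)"

lemma dil_lebesgue[measurable]: "dil b r k \<in> sets lebesgue"
  by (simp add: dil_def cube_lebesgue)

lemma dil_mono:
  assumes "cube (b::real^'n) r \<subseteq> cube a l" "0 < r" "(2^k - 1) * r \<le> (2^j - 1) * l"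
  shows "dil b r k \<subseteq> dil a l j"
  unfolding dil_def
proof (rule subcube_of_coords)
  fix i
  have "a$i \<le> b$i" "b$i + r \<le> a$i + l" using subcube_coords[OF assms(1,2)] by auto
  then show "dil_corner a l j $ i \<le> dil_corner b r k $ i \<and>
        dil_corner b r k $ i + 2 ^ k * r \<le> dil_corner a l j $ i + 2 ^ j * l"
    using assms(3) by (simp add: dil_corner_def field_simps)
qed

text \<open>If x lies in 2^k Q and Q has side at most rho, then Q lies in the cube of side
  (2^k + 1) rho centred at x; this bounds the overlap of dilates of cubes of similar size.\<close>
lemma dil_local:
  assumes "x \<in> dil (b::real^'n) r k" "0 < r" "r \<le> \<rho>"
  shows "cube b r \<subseteq> cube (\<chi> i. x$i - (2^k + 1) * \<rho> / 2) ((2^k + 1) * \<rho>)"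
proof (rule subcube_of_coords)
  fix i
  have x: "b$i - (2^k - 1) * r / 2 \<le> x$i" "x$i < b$i - (2^k - 1) * r / 2 + 2^k * r"
    using assms(1) by (auto simp: dil_def cube_def dil_corner_def)
  have "(2^k + 1) * r \<le> (2^k + 1) * \<rho>" using assms(3) by (intro mult_left_mono) auto
  then show "(\<chi> i. x$i - (2^k + 1) * \<rho> / 2) $ i \<le> b $ i \<and>
         b $ i + r \<le> (\<chi> i. x$i - (2^k + 1) * \<rho> / 2) $ i + (2^k + 1) * \<rho>"
    using x by (simp add: field_simps)
qed

section \<open>The dyadic scale of a subcube\<close>

definition dyadic_scale :: "real \<Rightarrow> real \<Rightarrow> nat" where
  "dyadic_scale l r = nat \<lfloor>log 2 (l / r)\<rfloor>"

lemma dyadic_scale: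
  assumes "0 < r" "r \<le> l"
  shows "2 ^ dyadic_scale l r * r \<le> l" "l < 2 ^ Suc (dyadic_scale l r) * r"
proof -
  define t where "t = log 2 (l / r)"
  have lr: "1 \<le> l / r" using assms by simp
  have t0: "0 \<le> t" unfolding t_def using lr by simp
  have ft: "real (dyadic_scale l r) = of_int \<lfloor>t\<rfloor>"
    unfolding dyadic_scale_def t_def[symmetric] using t0 by simp
  have e: "2 powr t = l / r" unfolding t_def using lr by simp
  have "(2::real) ^ dyadic_scale l r = 2 powr real (dyadic_scale l r)" by (simp add: powr_realpow)
  also have "\<dots> \<le> 2 powr t" using ft by simp
  finally show "2 ^ dyadic_scale l r * r \<le> l" using assms e by (simp add: field_simps)
  have "l / r = 2 powr t" using e by simp
  also have "\<dots> < 2 powr (real (dyadic_scale l r) + 1)"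
    using ft by simp
  also have "\<dots> = 2 ^ Suc (dyadic_scale l r)" by (simp add: powr_realpow[symmetric] powr_add)
  finally show "l < 2 ^ Suc (dyadic_scale l r) * r" using assms by (simp add: field_simps)
qed

lemma dyadic_scale_side:
  assumes "cube (b::real^'n) r \<subseteq> cube a l" "0 < r" "dyadic_scale l r = m"
  shows "r \<le> l / 2 ^ m" "l / 2 ^ m / 2 < r"
  using dyadic_scale[OF assms(2) subcube_side_le[OF assms(1,2)]] assms(3)
  by (auto simp: field_simps)

lemma dil_in_double:
  assumes "cube (b::real^'n) r \<subseteq> cube a l" "0 < r" "k \<le> dyadic_scale l r"
  shows "dil b r k \<subseteq> dil a l 1"
proof (rule dil_mono[OF assms(1,2)])
  have "(2::real) ^ k \<le> 2 ^ dyadic_scale l r" using assms(3) by (intro power_increasing) auto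
  then have "(2::real) ^ k - 1 \<le> 2 ^ dyadic_scale l r" by linarith
  then have "(2 ^ k - 1) * r \<le> 2 ^ dyadic_scale l r * r"
    using assms(2) by (intro mult_right_mono) auto
  also have "\<dots> \<le> l" using dyadic_scale[OF assms(2) subcube_side_le[OF assms(1,2)]] by simp
  finally show "(2 ^ k - 1) * r \<le> (2 ^ 1 - 1) * l" by simp
qed

lemma same_scale_card:
  fixes a :: "real^'n"
  assumes fG: "finite G" and l0: "0 < l"
    and G: "\<And>P. P \<in> G \<Longrightarrow> 0 < snd P \<and> cube (fst P) (snd P) \<subseteq> cube a l \<and> dyadic_scale l (snd P) = m"
    and disj: "\<And>P P'. P \<in> G \<Longrightarrow> P' \<in> G \<Longrightarrow> P \<noteq> P' \<Longrightarrow>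
                 cube (fst P) (snd P) \<inter> cube (fst P') (snd P') = {}"
  shows "real (card G) \<le> 2 ^ ((m + 1) * CARD('n))"
proof -
  define t where "t = l / 2 ^ m / 2"
  have l: "l = 2 ^ (m + 1) * t" by (simp add: t_def)
  have "real (card G) \<le> (2 ^ (m + 1)) ^ CARD('n)"
  proof (rule disjoint_subcubes_card[OF fG])
    show "t \<le> snd P \<and> cube (fst P) (snd P) \<subseteq> cube a (2 ^ (m + 1) * t)" if "P \<in> G" for P
      using G[OF that] dyadic_scale_side(2)[of "fst P" "snd P" a l m] by (auto simp: t_def simp flip: l)
  qed (use disj l0 in \<open>auto simp: t_def\<close>)
  then show ?thesis by (simp only: power_mult)
qed

text \<open>The k-fold dilates (k <= m) of subcubes of one scale m lie in 2Q and overlap at most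
  2^((k+2) n) times: all cubes whose dilate contains x fit into one cube around x.\<close>
lemma same_scale_overlap:
  fixes a :: "real^'n"
  assumes fG: "finite G" and l0: "0 < l"
    and G: "\<And>P. P \<in> G \<Longrightarrow> 0 < snd P \<and> cube (fst P) (snd P) \<subseteq> cube a l \<and> dyadic_scale l (snd P) = m"
    and disj: "\<And>P P'. P \<in> G \<Longrightarrow> P' \<in> G \<Longrightarrow> P \<noteq> P' \<Longrightarrow>
                 cube (fst P) (snd P) \<inter> cube (fst P') (snd P') = {}"
    and km: "k \<le> m"
  shows "(\<Sum>P\<in>G. indicator (dil (fst P) (snd P) k) x)
           \<le> 2 ^ ((k + 2) * CARD('n)) * (indicator (dil a l 1) x :: real)"
proof -
  define t where "t = l / 2 ^ m / 2"
  define S where "S = {P\<in>G. x \<in> dil (fst P) (snd P) k}"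
  define c :: "real^'n" where "c = (\<chi> i. x$i - (2^k + 1) * (2 * t) / 2)"
  have t0: "0 < t" using l0 by (simp add: t_def)
  have e: "(\<Sum>P\<in>G. indicator (dil (fst P) (snd P) k) x) = real (card S)"
    using fG by (simp add: S_def indicator_def sum.If_cases Int_def)
  show ?thesis
  proof (cases "S = {}")
    case True then show ?thesis using e by (simp add: indicator_def)
  next
    case False
    then obtain P0 where "P0 \<in> G" "x \<in> dil (fst P0) (snd P0) k" by (auto simp: S_def)
    then have x: "x \<in> dil a l 1" using G[of P0] km dil_in_double[of "fst P0" "snd P0" a l k] by auto
    have "real (card S) \<le> (2 * (2^k + 1)) ^ CARD('n)"
    proof (rule disjoint_subcubes_card)
      show "t \<le> snd P \<and> cube (fst P) (snd P) \<subseteq> cube c (2 * (2^k + 1) * t)" if "P \<in> S" for P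
      proof -
        have P: "P \<in> G" "x \<in> dil (fst P) (snd P) k" using that by (auto simp: S_def)
        have "t < snd P" "snd P \<le> 2 * t"
          using G[OF P(1)] dyadic_scale_side[of "fst P" "snd P" a l m] by (auto simp: t_def)
        moreover have "cube (fst P) (snd P) \<subseteq> cube c ((2^k + 1) * (2 * t))"
          unfolding c_def using P(2) G[OF P(1)] \<open>snd P \<le> 2 * t\<close> by (intro dil_local) auto
        moreover have "(2^k + 1) * (2 * t) = 2 * (2^k + 1) * t" by simp
        ultimately show ?thesis by simp
      qed
      show "finite S" using fG by (simp add: S_def)
      show "cube (fst P) (snd P) \<inter> cube (fst P') (snd P') = {}"
        if "P \<in> S" "P' \<in> S" "P \<noteq> P'" for P P'
        using disj that by (simp add: S_def)
    qed (use t0 in auto)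
    also have "\<dots> \<le> ((2::real) ^ (k + 2)) ^ CARD('n)"
      by (intro power_mono) auto
    finally have "real (card S) \<le> 2 ^ ((k + 2) * CARD('n))" by (simp only: power_mult)
    then show ?thesis using e x by simp
  qed
qed

lemma far_dilate:
  assumes sub: "cube (b::real^'n) r \<subseteq> cube a l" and r0: "0 < r"
    and km: "dyadic_scale l r + 1 \<le> k" and j: "j = k - dyadic_scale l r + 1"
  shows "dil b r k \<subseteq> dil a l j" "2 ^ j * l \<le> 4 * (2 ^ k * r)"
proof -
  define m where "m = dyadic_scale l r"
  have m1: "2 ^ m * r \<le> l" and m2: "l < 2 ^ Suc m * r"
    using dyadic_scale[OF r0 subcube_side_le[OF sub r0]] by (auto simp: m_def)
  have kj: "k = (j - 2) + (m + 1)" "j - 1 = k - m" "2 \<le> j" using km by (auto simp: j m_def)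
  have "(2 ^ k - 1) * r \<le> 2 ^ k * r" using r0 by simp
  also have "2 ^ k * r = 2 ^ (j - 1) * (2 ^ m * r)"
    using km kj(2) by (simp add: m_def power_add[symmetric])
  also have "\<dots> \<le> 2 ^ (j - 1) * l" using m1 by (intro mult_left_mono) auto
  also have "\<dots> \<le> (2 ^ j - 1) * l"
  proof (rule mult_right_mono)
    have "(2::real) ^ j = 2 * 2 ^ (j - 1)" using kj(3) by (simp add: power_Suc[symmetric])
    then show "(2::real) ^ (j - 1) \<le> 2 ^ j - 1" by simp
  qed (use r0 subcube_side_le[OF sub r0] in auto)
  finally show "dil b r k \<subseteq> dil a l j" by (rule dil_mono[OF sub r0])
  obtain i where i: "j = 2 + i" using le_Suc_ex[OF kj(3)] by blast
  have "(2::real) ^ j = 4 * 2 ^ (j - 2)" by (simp add: i power_add)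
  then have "2 ^ j * l = 4 * (2 ^ (j - 2) * l)" by simp
  also have "2 ^ (j - 2) * l \<le> 2 ^ (j - 2) * (2 ^ Suc m * r)" using m2 by (intro mult_left_mono) auto
  also have "\<dots> = 2 ^ k * r" using kj(1) by (simp add: power_add)
  finally show "2 ^ j * l \<le> 4 * (2 ^ k * r)" by simp
qed

section \<open>The terms of a(Q)\<close>

definition mass :: "(real^'n \<Rightarrow> real) \<Rightarrow> real \<Rightarrow> (real^'n) set \<Rightarrow> real" where
  "mass h s E = enn2real (\<integral>\<^sup>+ x. ennreal (h x powr s) * indicator E x \<partial>lebesgue)"

lemma mass_nonneg[simp]: "0 \<le> mass h s E"
  by (simp add: mass_def)

definition aterm :: "(real^'n \<Rightarrow> real) \<Rightarrow> real \<Rightarrow> real^'n \<Rightarrow> real \<Rightarrow> nat \<Rightarrow> real" where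
  "aterm h s b r k = (2^k * r) powr (1 - real CARD('n) / s) * mass h s (dil b r k) powr (1/s)"

lemma aterm_nonneg[simp]: "0 \<le> aterm h s b r k"
  by (simp add: aterm_def)

lemma aterm_powr:
  assumes "0 < r" "0 < s" "0 < q"
  shows "aterm h s b r k powr q * r ^ CARD('n) =
    2 powr (real k * (q - q * real CARD('n) / s)) * r powr (real CARD('n) + q - q * real CARD('n) / s)
      * mass h s (dil b (r::real) k :: (real^'n) set) powr (q / s)"
proof -
  define n where "n = real CARD('n)"
  define I where "I = mass h s (dil b r k :: (real^'n) set)"
  have "aterm h s b r k powr q = (2^k * r) powr ((1 - n/s) * q) * I powr (q/s)"
    unfolding aterm_def n_def I_def using assms by (simp add: powr_mult powr_powr)
  also have "(2^k * r) powr ((1 - n/s) * q) = 2 powr (real k * (q - q * n / s)) * r powr ((1 - n/s) * q)"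
    using assms by (simp add: powr_mult powr_realpow[symmetric] powr_powr field_simps)
  finally have "aterm h s b r k powr q * r ^ CARD('n) =
      2 powr (real k * (q - q * n / s)) * (r powr ((1 - n/s) * q) * r powr n) * I powr (q/s)"
    using assms by (simp add: n_def powr_realpow mult_ac)
  also have "r powr ((1 - n/s) * q) * r powr n = r powr (n + q - q * n / s)"
    using assms by (simp add: powr_add[symmetric] field_simps)
  finally show ?thesis by (simp add: n_def I_def)
qed

lemma nn_integral_sum_indicator_le:
  fixes f :: "'a \<Rightarrow> ennreal"
  assumes "finite G" "f \<in> borel_measurable M" "\<And>P. P \<in> G \<Longrightarrow> E P \<in> sets M"
    "D \<in> sets M" "0 \<le> N" "\<And>x. (\<Sum>P\<in>G. indicator (E P) x) \<le> N * (indicator D x :: real)"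
  shows "(\<Sum>P\<in>G. \<integral>\<^sup>+ x. f x * indicator (E P) x \<partial>M) \<le> ennreal N * (\<integral>\<^sup>+ x. f x * indicator D x \<partial>M)"
proof -
  have "(\<Sum>P\<in>G. \<integral>\<^sup>+ x. f x * indicator (E P) x \<partial>M) = (\<integral>\<^sup>+ x. (\<Sum>P\<in>G. f x * indicator (E P) x) \<partial>M)"
    by (rule nn_integral_sum[symmetric]) (use assms in auto)
  also have "\<dots> \<le> (\<integral>\<^sup>+ x. ennreal N * (f x * indicator D x) \<partial>M)"
  proof (rule nn_integral_mono)
    fix x
    have "(\<Sum>P\<in>G. f x * indicator (E P) x) = f x * ennreal (\<Sum>P\<in>G. indicator (E P) x)"
      by (simp add: ennreal_indicator sum_distrib_left flip: sum_ennreal)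
    also have "\<dots> \<le> f x * ennreal (N * indicator D x)"
      by (intro mult_left_mono ennreal_leI assms(6)) auto
    also have "\<dots> = ennreal N * (f x * indicator D x)"
      using assms(5) by (simp add: ennreal_mult ennreal_indicator mult_ac)
    finally show "(\<Sum>P\<in>G. f x * indicator (E P) x) \<le> ennreal N * (f x * indicator D x)" .
  qed
  also have "\<dots> = ennreal N * (\<integral>\<^sup>+ x. f x * indicator D x \<partial>M)"
    by (rule nn_integral_cmult) (use assms in auto)
  finally show ?thesis .
qed

section \<open>Modified weights, constants and bookkeeping of exponents\<close>

text \<open>Each modified weight with index j >= 1 dominates 2^(-n e) gamma_k for all k >= j - 1:
  the series defining it contains the term gamma_k 2^(k n e).\<close>
lemma gbar_ge:
  assumes \<gamma>0: "\<And>k. 0 \<le> \<gamma> k" and j: "1 \<le> j" "j \<le> k + 1"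
  shows "ennreal (2 powr (- (real n * max (1/s - 1/q) 0)) * \<gamma> k) \<le> gbar C n s q \<gamma> j"
proof -
  define e where "e = max (1/s - 1/q) (0::real)"
  define t where "t = k + 1 - j"
  have tk: "t + (j - 1) = k" using j by (simp add: t_def)
  have "- (real n * e) \<le> - real j * real n * e + real k * real n * e"
  proof -
    have "(real j - 1) * (real n * e) \<le> real k * (real n * e)"
      using j by (intro mult_right_mono) (auto simp: e_def)
    then show ?thesis by (simp add: algebra_simps)
  qed
  then have "2 powr (- (real n * e)) * \<gamma> k \<le> \<gamma> k * 2 powr (- real j * real n * e + real k * real n * e)"
    using \<gamma>0[of k] by (simp add: mult.commute mult_left_mono)
  also have "\<dots> = 2 powr (- real j * real n * e) * (\<gamma> (t + (j - 1)) * 2 powr (real (t + (j - 1)) * real n * e))"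
    unfolding tk powr_add by (simp only: mult_ac)
  finally have "2 powr (- (real n * e)) * \<gamma> k \<le>
      2 powr (- real j * real n * e) * (\<gamma> (t + (j - 1)) * 2 powr (real (t + (j - 1)) * real n * e))" .
  then have "ennreal (2 powr (- (real n * e)) * \<gamma> k) \<le>
      ennreal (2 powr (- real j * real n * e)) * ennreal (\<gamma> (t + (j - 1)) * 2 powr (real (t + (j - 1)) * real n * e))"
    using \<gamma>0 by (simp add: ennreal_leI flip: ennreal_mult)
  also have "\<dots> \<le> ennreal (2 powr (- real j * real n * e)) *
      (\<Sum>i. ennreal (\<gamma> (i + (j - 1)) * 2 powr (real (i + (j - 1)) * real n * e)))"
    by (intro mult_left_mono ennreal_le_suminf_term) auto
  also have "\<dots> = gbar C n s q \<gamma> j"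
    using j by (simp add: gbar_def e_def)
  finally show ?thesis by (simp add: e_def)
qed

text \<open>The constant in the comparison of far terms with the terms of bar_a(Q).\<close>
definition far_const :: "real \<Rightarrow> real \<Rightarrow> real \<Rightarrow> real" where
  "far_const n s q = 4 powr (n / s - 1) * 2 powr (n * max (1/s - 1/q) 0)"

text \<open>The rate mu = n + q - q n / s - n (1 - q/s)^+ of geometric decay of the contributions of
  the cubes of scale m, and the resulting constant in the estimate of the near terms.\<close>
definition decay_rate :: "real \<Rightarrow> real \<Rightarrow> real \<Rightarrow> real" where
  "decay_rate n s q = n + q - q * n / s - n * max (1 - q/s) 0"

definition near_const :: "real \<Rightarrow> real \<Rightarrow> real \<Rightarrow> real" where
  "near_const n s q = 2 powr (n * (2 * (q/s) + max (1 - q/s) 0) - (q - q * n / s))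
         / (1 - 2 powr (- decay_rate n s q))"

definition total_const :: "real \<Rightarrow> real \<Rightarrow> real \<Rightarrow> real" where
  "total_const n s q =
     max 1 (2 powr q * (near_const n s q * 2 powr (q * (n * max (1/s - 1/q) 0)) + far_const n s q powr q))"

lemma same_scale_powers:
  fixes d :: nat
  assumes "0 < l"
  shows "2 powr (real k * (q - q * real d / s)) * (l / 2 ^ m) powr (real d + q - q * real d / s)
           * ((2 powr (real (m + 1) * real d)) powr max (1 - q/s) 0 * (2 ^ ((k + 2) * d) * J) powr (q/s))
       = 2 powr (real k * q + real d * (2 * (q/s) + max (1 - q/s) 0))
           * 2 powr (- (real m * decay_rate (real d) s q))
           * l powr (real d + q - q * real d / s) * J powr (q / s)"
proof -
  define n where "n = real d"
  define \<nu> where "\<nu> = n + q - q * n / s"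
  define e where "e = max (1 - q/s) (0::real)"
  define p where "p = q / s"
  have "(l / 2 ^ m) = l / 2 powr real m" by (simp add: powr_realpow)
  then have "(l / 2 ^ m) powr \<nu> = l powr \<nu> / 2 powr (real m * \<nu>)"
    using assms by (simp add: powr_divide powr_powr)
  then have 1: "(l / 2 ^ m) powr \<nu> = l powr \<nu> * 2 powr (- (real m * \<nu>))"
    by (simp add: powr_minus divide_inverse)
  have "(2::real) ^ ((k + 2) * d) = 2 powr real ((k + 2) * d)" by (rule powr_realpow[symmetric]) simp
  then have "(2::real) ^ ((k + 2) * d) = 2 powr (real (k + 2) * n)" by (simp only: of_nat_mult n_def)
  then have 2: "(2 ^ ((k + 2) * d) * J) powr p = 2 powr (real (k + 2) * n * p) * J powr p"
    by (simp only: powr_mult powr_powr)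
  have 3: "(2 powr (real (m + 1) * n)) powr e = 2 powr (real (m + 1) * n * e)"
    by (simp add: powr_powr)
  have 4: "real k * (q - q * n / s) + - (real m * \<nu>) + real (m + 1) * n * e + real (k + 2) * n * p
      = real k * q + n * (2 * p + e) + - (real m * decay_rate n s q)"
    by (simp add: p_def \<nu>_def e_def decay_rate_def algebra_simps)
  have "2 powr (real k * (q - q * n / s)) * (l / 2 ^ m) powr \<nu> * ((2 powr (real (m + 1) * n)) powr e * (2 ^ ((k + 2) * d) * J) powr p)
      = 2 powr (real k * (q - q * n / s) + - (real m * \<nu>) + real (m + 1) * n * e + real (k + 2) * n * p) * l powr \<nu> * J powr p"
    unfolding 1 2 3 by (simp only: powr_add mult_ac)
  also have "\<dots> = 2 powr (real k * q + n * (2 * p + e)) * 2 powr (- (real m * decay_rate n s q)) * l powr \<nu> * J powr p"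
    unfolding 4 powr_add by (simp only: mult_ac)
  finally show ?thesis by (simp only: n_def \<nu>_def e_def p_def)
qed

lemma near_const_geometric:
  assumes "0 < decay_rate n s q"
  defines "x \<equiv> 2 powr (- decay_rate n s q)"
  shows "2 powr (real k * q + n * (2 * (q/s) + max (1 - q/s) 0)) * (x ^ k / (1 - x))
       = near_const n s q * 2 powr (real k * (q - decay_rate n s q)) * 2 powr (q - q * n / s)"
proof -
  define E where "E = n * (2 * (q/s) + max (1 - q/s) 0)"
  define \<mu> where "\<mu> = decay_rate n s q"
  have x: "x < 1" using assms(1) by (simp add: x_def powr_less_one)
  have "x ^ k = 2 powr (- (real k * \<mu>))"
    by (simp add: x_def \<mu>_def powr_realpow[symmetric] powr_powr mult.commute)
  then have "2 powr (real k * q + E) * x ^ k = 2 powr (E - (q - q * n / s)) * 2 powr (real k * (q - \<mu>)) * 2 powr (q - q * n / s)"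
    by (simp only: powr_add[symmetric]) (rule arg_cong[where f="(powr) 2"], simp add: algebra_simps)
  also have "2 powr (E - (q - q * n / s)) = near_const n s q * (1 - x)"
    using x assms(1) by (simp add: near_const_def x_def \<mu>_def E_def)
  finally have "2 powr (real k * q + E) * x ^ k / (1 - x)
      = (1 - x) * (near_const n s q * 2 powr (real k * (q - \<mu>)) * 2 powr (q - q * n / s)) / (1 - x)"
    by (simp only: mult_ac)
  also have "\<dots> = near_const n s q * 2 powr (real k * (q - \<mu>)) * 2 powr (q - q * n / s)"
    using x by (simp only: nonzero_mult_div_cancel_left)
  finally show ?thesis by (simp only: E_def \<mu>_def times_divide_eq_right)
qed

section \<open>The estimate for a fixed weight h\<close>

context
  fixes h :: "real^'n \<Rightarrow> real" and s :: real
  assumes h_nonneg: "\<And>x. 0 \<le> h x"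
    and h_meas: "h \<in> borel_measurable lebesgue"
    and h_loc: "\<And>K. compact K \<Longrightarrow> set_integrable lebesgue K (\<lambda>x. h x powr s)"
    and s_pos: "0 < s"
begin

lemma mass_eq_integral:
  assumes "E \<in> sets lebesgue"
  shows "mass h s E = (LINT x:E|lebesgue. h x powr s)"
  unfolding mass_def set_lebesgue_integral_def
  by (rule enn2real_nn_integral_eq_integral) (use assms h_nonneg h_meas in \<open>auto simp: indicator_def\<close>)

lemma nn_integral_dil_finite:
  "(\<integral>\<^sup>+ x. ennreal (h x powr s) * indicator (dil b r k) x \<partial>lebesgue) < \<infinity>"
proof -
  define c where "c = dil_corner b r k"
  have "cube c (2^k * r) \<subseteq> cbox c (c + (\<chi> i. 2^k * r))"
    by (force simp: cube_def mem_box_cart less_imp_le)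
  then have "set_integrable lebesgue (dil b r k) (\<lambda>x. h x powr s)"
    unfolding dil_def c_def[symmetric] by (rule set_integrable_subset[OF h_loc[OF compact_cbox] cube_lebesgue])
  then have "integrable lebesgue (\<lambda>x. indicator (dil b r k) x * h x powr s)"
    by (simp add: set_integrable_def)
  from integrableD(2)[OF this] show ?thesis
    by (simp add: ennreal_mult' ennreal_indicator mult.commute less_top)
qed

lemma mass_mono:
  assumes "E \<subseteq> dil b r k"
  shows "mass h s E \<le> mass h s (dil b r k)"
  unfolding mass_def
proof (rule enn2real_mono)
  show "(\<integral>\<^sup>+ x. ennreal (h x powr s) * indicator E x \<partial>lebesgue)
      \<le> (\<integral>\<^sup>+ x. ennreal (h x powr s) * indicator (dil b r k) x \<partial>lebesgue)"
    by (intro nn_integral_mono mult_left_mono) (use assms in \<open>auto simp: indicator_def\<close>)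
qed (use nn_integral_dil_finite in auto)

lemma mass_sum_le:
  assumes "finite G" "\<And>P. P \<in> G \<Longrightarrow> E P \<in> sets lebesgue" "0 \<le> N"
    "\<And>x. (\<Sum>P\<in>G. indicator (E P) x) \<le> N * (indicator (dil b r k) x :: real)"
  shows "(\<Sum>P\<in>G. mass h s (E P)) \<le> N * mass h s (dil b r k)"
proof -
  define \<mu> where "\<mu> F = (\<integral>\<^sup>+ x. ennreal (h x powr s) * indicator F x \<partial>lebesgue)" for F
  have le: "(\<Sum>P\<in>G. \<mu> (E P)) \<le> ennreal N * \<mu> (dil b r k)"
    unfolding \<mu>_def using h_meas by (intro nn_integral_sum_indicator_le assms) auto
  have fin: "ennreal N * \<mu> (dil b r k) < \<infinity>"
    using nn_integral_dil_finite by (simp add: \<mu>_def ennreal_mult_less_top)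
  have "\<mu> (E P) < \<infinity>" if "P \<in> G" for P
    using member_le_sum[of P G "\<lambda>P. \<mu> (E P)"] that assms(1) le fin by simp
  then have "(\<Sum>P\<in>G. mass h s (E P)) = enn2real (\<Sum>P\<in>G. \<mu> (E P))"
    unfolding mass_def \<mu>_def[symmetric] by (subst enn2real_sum) auto
  also have "\<dots> \<le> enn2real (ennreal N * \<mu> (dil b r k))"
    using le fin by (intro enn2real_mono) auto
  also have "\<dots> = N * mass h s (dil b r k)"
    using assms(3) by (simp add: mass_def \<mu>_def enn2real_mult)
  finally show ?thesis .
qed

lemma aQ_eq:
  assumes "0 < r"
  shows "aQ g h s b r = (\<Sum>k. g k * ennreal (aterm h s b r k))"
  unfolding aQ_def
proof (intro suminf_cong arg_cong2[where f="(*)"] refl arg_cong[where f=ennreal])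
  fix k
  define R where "R = (2::real)^k * r"
  have R: "0 < R" using assms by (simp add: R_def)
  have av: "avg (cube (dil_corner b r k) (2 ^ k * r)) (\<lambda>x. h x powr s) = mass h s (dil b r k) / R ^ CARD('n)"
    unfolding avg_def using R
    by (simp add: mass_eq_integral[OF cube_lebesgue] dil_def measure_cube R_def)
  have "R * (mass h s (dil b r k) / R ^ CARD('n)) powr (1/s)
      = R * (mass h s (dil b r k) powr (1/s) / R powr (real CARD('n) / s))"
    using R by (simp add: powr_divide powr_realpow[symmetric] powr_powr)
  also have "\<dots> = R powr (1 - real CARD('n) / s) * mass h s (dil b r k) powr (1/s)"
    using R by (simp add: powr_diff)
  finally show "2 ^ k * r * avg (cube (dil_corner b r k) (2 ^ k * r)) (\<lambda>x. h x powr s) powr (1 / s)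
      = aterm h s b r k"
    by (simp add: aterm_def av R_def)
qed

context
  fixes q :: real
  assumes s_lt_n: "s < real CARD('n)" and q_ge_1: "1 \<le> q"
    and q_lt_crit: "q < s * real CARD('n) / (real CARD('n) - s)"
begin

lemma q_pos: "0 < q"
  using q_ge_1 by simp

text \<open>The exponent n + q - q n / s of the side length in A_k(Q)^q |Q| is positive exactly
  because q is below the Sobolev exponent s^* = s n / (n - s).\<close>
lemma excess_pos: "0 < real CARD('n) + q - q * real CARD('n) / s"
proof -
  have ns: "0 < real CARD('n) - s" using s_lt_n by simp
  have "q * (real CARD('n) - s) < s * real CARD('n)"
    using q_lt_crit ns by (simp add: pos_less_divide_eq)
  then have "q * real CARD('n) < s * (real CARD('n) + q)" by (simp add: algebra_simps)
  then have "q * real CARD('n) / s < real CARD('n) + q"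
    using s_pos by (simp add: divide_less_eq mult.commute)
  then show ?thesis by simp
qed

subsection \<open>Far terms\<close>

text \<open>A far term of a subcube is controlled by a term of Q with shifted index; the factor
  comes from the comparability of side lengths, since 1 - n/s < 0.\<close>
lemma far_term_le:
  assumes r0: "0 < r" and sub: "cube b r \<subseteq> cube a l" and km: "dyadic_scale l r + 1 \<le> k"
  shows "aterm h s b r k \<le> 4 powr (real CARD('n) / s - 1) * aterm h s a l (k - dyadic_scale l r + 1)"
proof -
  define n where "n = real CARD('n)"
  define j where "j = k - dyadic_scale l r + 1"
  have D: "dil b r k \<subseteq> dil a l j" and side: "2 ^ j * l \<le> 4 * (2 ^ k * r)"
    using far_dilate[OF sub r0 km] by (auto simp: j_def)
  have l0: "0 < l" using subcube_side_le[OF sub r0] r0 by simp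
  have "(2 ^ k * r) powr (1 - n / s) \<le> (2 ^ j * l / 4) powr (1 - n / s)"
    using side l0 s_lt_n s_pos by (intro powr_mono2') (auto simp: n_def field_simps)
  also have "\<dots> = 4 powr (n / s - 1) * (2 ^ j * l) powr (1 - n / s)"
    using l0 by (simp add: powr_divide powr_minus_divide[symmetric] powr_diff field_simps)
  finally have "(2 ^ k * r) powr (1 - n / s) \<le> 4 powr (n / s - 1) * (2 ^ j * l) powr (1 - n / s)" .
  moreover have "mass h s (dil b r k) powr (1/s) \<le> mass h s (dil a l j) powr (1/s)"
    using D s_pos by (intro powr_mono2 mass_mono) auto
  ultimately have "aterm h s b r k \<le> 4 powr (n / s - 1) * (2 ^ j * l) powr (1 - n / s) * mass h s (dil a l j) powr (1/s)"
    unfolding aterm_def n_def by (intro mult_mono) auto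
  then show ?thesis by (simp add: aterm_def n_def j_def mult.assoc)
qed

lemma far_term_le_gbar:
  assumes \<gamma>0: "\<And>k. 0 \<le> \<gamma> k" and r0: "0 < r" and sub: "cube b r \<subseteq> cube a l"
    and km: "dyadic_scale l r + 1 \<le> k" and j: "j = k - dyadic_scale l r + 1"
  shows "ennreal (\<gamma> k) * ennreal (aterm h s b r k)
    \<le> ennreal (far_const (real CARD('n)) s q) * (gbar C CARD('n) s q \<gamma> j * ennreal (aterm h s a l j))"
proof -
  define c where "c = 4 powr (real CARD('n) / s - 1)"
  define e where "e = real CARD('n) * max (1/s - 1/q) 0"
  have "ennreal (\<gamma> k) * ennreal (aterm h s b r k) \<le> ennreal (\<gamma> k) * ennreal (c * aterm h s a l j)"
    using far_term_le[OF r0 sub km] by (intro mult_left_mono ennreal_leI) (auto simp: c_def j)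
  also have "\<dots> = ennreal (far_const (real CARD('n)) s q) * (ennreal (2 powr (- e) * \<gamma> k) * ennreal (aterm h s a l j))"
  proof -
    have "\<gamma> k * (c * aterm h s a l j) = far_const (real CARD('n)) s q * ((2 powr (- e) * \<gamma> k) * aterm h s a l j)"
      by (simp add: far_const_def c_def e_def powr_minus field_simps)
    then show ?thesis using \<gamma>0 by (simp add: c_def far_const_def flip: ennreal_mult)
  qed
  also have "\<dots> \<le> ennreal (far_const (real CARD('n)) s q) * (gbar C CARD('n) s q \<gamma> j * ennreal (aterm h s a l j))"
    using gbar_ge[of \<gamma> j k "CARD('n)" s q C] \<gamma>0 j km
    by (intro mult_left_mono mult_right_mono) (auto simp: e_def)
  finally show ?thesis .
qed

lemma aQ_far_split:
  assumes \<gamma>0: "\<And>k. 0 \<le> \<gamma> k" and r0: "0 < r" and sub: "cube b r \<subseteq> cube a l"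
  shows "aQ (\<lambda>k. ennreal (\<gamma> k)) h s b r
     \<le> ennreal (\<Sum>k\<le>dyadic_scale l r. \<gamma> k * aterm h s b r k)
       + ennreal (far_const (real CARD('n)) s q) * aQ (gbar C CARD('n) s q \<gamma>) h s a l"
proof -
  define m where "m = dyadic_scale l r"
  define c where "c = far_const (real CARD('n)) s q"
  define f where "f k = ennreal (\<gamma> k) * ennreal (aterm h s b r k)" for k
  define T where "T j = gbar C CARD('n) s q \<gamma> j * ennreal (aterm h s a l j)" for j
  have l0: "0 < l" using subcube_side_le[OF sub r0] r0 by simp
  have far: "f (i + (m + 1)) \<le> ennreal c * T (i + 2)" for i
    unfolding f_def T_def c_def m_def by (rule far_term_le_gbar[OF \<gamma>0 r0 sub]) auto
  have near: "(\<Sum>k<m + 1. f k) = ennreal (\<Sum>k\<le>m. \<gamma> k * aterm h s b r k)"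
    using \<gamma>0 by (simp add: f_def lessThan_Suc_atMost flip: ennreal_mult)
  have "aQ (\<lambda>k. ennreal (\<gamma> k)) h s b r = (\<Sum>i. f (i + (m + 1))) + (\<Sum>k<m + 1. f k)"
    unfolding aQ_eq[OF r0] f_def[symmetric] by (rule suminf_offset) simp
  also have "(\<Sum>i. f (i + (m + 1))) \<le> ennreal c * (\<Sum>i. T (i + 2))"
    using far by (simp add: suminf_le flip: ennreal_suminf_cmult)
  also have "(\<Sum>i. T (i + 2)) \<le> (\<Sum>j. T j)"
    using suminf_offset[of T 2] by simp
  also have "(\<Sum>j. T j) = aQ (gbar C CARD('n) s q \<gamma>) h s a l"
    unfolding T_def by (rule aQ_eq[OF l0, symmetric])
  finally show ?thesis using near by (simp add: add.commute c_def m_def mult_left_mono)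
qed




subsection \<open>Near terms\<close>

lemma decay_rate_pos: "0 < decay_rate (real CARD('n)) s q"
proof (cases "q \<le> s")
  case True
  then have "decay_rate (real CARD('n)) s q = q" using s_pos by (simp add: decay_rate_def field_simps)
  then show ?thesis using q_pos by simp
next
  case False
  then have "decay_rate (real CARD('n)) s q = real CARD('n) + q - q * real CARD('n) / s"
    using s_pos by (simp add: decay_rate_def field_simps)
  then show ?thesis using excess_pos by simp
qed

text \<open>The decay rate falls short of q by exactly q n e, e = (1/s - 1/q)^+; this is where the
  modified weights bar_gamma get their factors 2^(k n e).\<close>
lemma decay_rate_gap:
  "q - decay_rate (real CARD('n)) s q = q * real CARD('n) * max (1/s - 1/q) 0"
proof -
  have "q - decay_rate (real CARD('n)) s q = real CARD('n) * (q/s - 1 + max (1 - q/s) 0)"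
    by (simp add: decay_rate_def algebra_simps)
  also have "q/s - 1 + max (1 - q/s) 0 = q * max (1/s - 1/q) 0"
    using q_pos s_pos by (auto simp: max_def field_simps)
  finally show ?thesis by (simp add: mult_ac)
qed

lemma near_const_nonneg: "0 \<le> near_const (real CARD('n)) s q"
proof -
  have "2 powr (- decay_rate (real CARD('n)) s q) < 1"
    using decay_rate_pos by (auto intro: powr_less_one)
  then show ?thesis by (simp add: near_const_def)
qed

text \<open>Contribution of the subcubes of one scale m >= k: with rho = l / 2^m, each term is
  2^(k(q - qn/s)) r^nu (int_{2^k Q'} h^s)^(q/s) with r <= rho; there are at most 2^((m+1) n)
  cubes and their masses add up to at most 2^((k+2) n) int_{2Q} h^s.\<close>
lemma same_scale_bound:
  fixes a :: "real^'n"
  assumes l0: "0 < l" and fG: "finite G"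
    and G: "\<And>P. P \<in> G \<Longrightarrow> 0 < snd P \<and> cube (fst P) (snd P) \<subseteq> cube a l \<and> dyadic_scale l (snd P) = m"
    and disj: "\<And>P P'. P \<in> G \<Longrightarrow> P' \<in> G \<Longrightarrow> P \<noteq> P' \<Longrightarrow>
                 cube (fst P) (snd P) \<inter> cube (fst P') (snd P') = {}"
    and km: "k \<le> m"
  shows "(\<Sum>P\<in>G. aterm h s (fst P) (snd P) k powr q * snd P ^ CARD('n))
    \<le> 2 powr (real k * q + real CARD('n) * (2 * (q/s) + max (1 - q/s) 0))
       * 2 powr (- (real m * decay_rate (real CARD('n)) s q))
       * l powr (real CARD('n) + q - q * real CARD('n) / s) * mass h s (dil a l 1) powr (q / s)"
proof -
  define n where "n = real CARD('n)"
  define \<rho> where "\<rho> = l / 2 ^ m"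
  define \<nu> where "\<nu> = n + q - q * n / s"
  define d where "d = max (1 - q/s) (0::real)"
  define p where "p = q / s"
  define J where "J = mass h s (dil a l 1)"
  define N :: real where "N = 2 ^ ((k + 2) * CARD('n))"
  define I where "I P = mass h s (dil (fst P) (snd P) k)" for P
  define X where "X = real k * (q - q * n / s)"
  have p0: "0 < p" using q_pos s_pos by (simp add: p_def)
  have side: "0 < snd P \<and> snd P \<le> \<rho>" if "P \<in> G" for P
    using G[OF that] dyadic_scale_side[of "fst P" "snd P" a l m] by (auto simp: \<rho>_def)
  have pw: "(2::real) ^ ((m + 1) * CARD('n)) = 2 powr real ((m + 1) * CARD('n))"
    by (rule powr_realpow[symmetric]) simp
  have "real (card G) \<le> 2 ^ ((m + 1) * CARD('n))"
    by (rule same_scale_card[OF fG l0 G disj])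
  then have card: "real (card G) \<le> 2 powr (real (m + 1) * n)"
    by (simp only: pw of_nat_mult n_def)
  have masses: "(\<Sum>P\<in>G. I P) \<le> N * J"
    unfolding I_def J_def N_def
    by (rule mass_sum_le[OF fG _ _ same_scale_overlap[OF fG l0 G disj km]]) auto
  have "(\<Sum>P\<in>G. aterm h s (fst P) (snd P) k powr q * snd P ^ CARD('n))
      = (\<Sum>P\<in>G. 2 powr X * snd P powr \<nu> * I P powr p)"
    using side by (intro sum.cong refl) (simp add: aterm_powr s_pos q_pos X_def n_def \<nu>_def p_def I_def)
  also have "\<dots> \<le> (\<Sum>P\<in>G. 2 powr X * \<rho> powr \<nu> * I P powr p)"
    using side excess_pos
    by (intro sum_mono mult_right_mono mult_left_mono powr_mono2) (auto simp: \<nu>_def n_def less_imp_le)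
  also have "\<dots> = 2 powr X * \<rho> powr \<nu> * (\<Sum>P\<in>G. I P powr p)"
    by (simp add: sum_distrib_left)
  also have "\<dots> \<le> 2 powr X * \<rho> powr \<nu> * (real (card G) powr d * (\<Sum>P\<in>G. I P) powr p)"
    using sum_powr_le_card[OF fG _ p0, of I] by (intro mult_left_mono) (auto simp: d_def p_def I_def)
  also have "\<dots> \<le> 2 powr X * \<rho> powr \<nu> * ((2 powr (real (m + 1) * n)) powr d * (N * J) powr p)"
    using card masses p0 by (intro mult_left_mono mult_mono powr_mono2)
      (auto simp: d_def N_def J_def I_def intro: sum_nonneg)
  also have "\<dots> = 2 powr (real k * q + n * (2 * p + d)) * 2 powr (- (real m * decay_rate n s q))
      * l powr \<nu> * J powr p"
    unfolding X_def \<rho>_def N_def n_def \<nu>_def d_def p_def by (rule same_scale_powers[OF l0])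
  finally show ?thesis by (simp only: p_def n_def \<nu>_def d_def J_def)
qed

lemma scale_sum_bound:
  fixes a :: "real^'n"
  assumes l0: "0 < l" and fF: "finite F"
    and F: "\<And>P. P \<in> F \<Longrightarrow> 0 < snd P \<and> cube (fst P) (snd P) \<subseteq> cube a l"
    and disj: "\<And>P P'. P \<in> F \<Longrightarrow> P' \<in> F \<Longrightarrow> P \<noteq> P' \<Longrightarrow>
                 cube (fst P) (snd P) \<inter> cube (fst P') (snd P') = {}"
  shows "(\<Sum>P\<in>{P\<in>F. k \<le> dyadic_scale l (snd P)}. aterm h s (fst P) (snd P) k powr q * snd P ^ CARD('n))
    \<le> near_const (real CARD('n)) s q * 2 powr (real k * q * real CARD('n) * max (1/s - 1/q) 0)
       * aterm h s a l 1 powr q * l ^ CARD('n)"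
proof -
  define n where "n = real CARD('n)"
  define \<nu> where "\<nu> = n + q - q * n / s"
  define \<mu> where "\<mu> = decay_rate n s q"
  define S where "S = {P\<in>F. k \<le> dyadic_scale l (snd P)}"
  define M where "M = (\<Sum>P\<in>F. dyadic_scale l (snd P))"
  define f where "f P = aterm h s (fst P) (snd P) k powr q * snd P ^ CARD('n)" for P
  define x where "x = 2 powr (- \<mu>)"
  define B where "B = 2 powr (real k * q + n * (2 * (q/s) + max (1 - q/s) 0))
                      * l powr \<nu> * mass h s (dil a l 1) powr (q / s)"
  have \<mu>0: "0 < \<mu>" using decay_rate_pos by (simp add: \<mu>_def n_def)
  then have x: "0 \<le> x" "x < 1" by (auto simp: x_def intro: powr_less_one)
  have "(\<Sum>P\<in>S. f P) \<le> B * (x ^ k / (1 - x))"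
  proof (rule grouped_geometric_sum)
    show "(\<lambda>P. dyadic_scale l (snd P)) ` S \<subseteq> {k..M}"
      using fF member_le_sum[of _ F "\<lambda>P. dyadic_scale l (snd P)"] by (auto simp: S_def M_def)
    show "(\<Sum>P\<in>{P\<in>S. dyadic_scale l (snd P) = m}. f P) \<le> B * x ^ m" if m: "m \<in> {k..M}" for m
    proof -
      have "x ^ m = 2 powr (- (real m * \<mu>))"
        by (simp add: x_def powr_realpow[symmetric] powr_powr mult.commute)
      moreover have "(\<Sum>P\<in>{P\<in>S. dyadic_scale l (snd P) = m}. f P)
          \<le> 2 powr (real k * q + n * (2 * (q/s) + max (1 - q/s) 0)) * 2 powr (- (real m * \<mu>))
             * l powr \<nu> * mass h s (dil a l 1) powr (q / s)"
        unfolding f_def n_def \<mu>_def \<nu>_def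
        by (rule same_scale_bound[OF l0]) (use fF F disj m in \<open>auto simp: S_def\<close>)
      ultimately show ?thesis by (simp add: B_def mult_ac)
    qed
  qed (use fF x in \<open>auto simp: S_def B_def\<close>)
  also have "B * (x ^ k / (1 - x)) = near_const n s q * 2 powr (real k * (q - \<mu>))
      * (2 powr (q - q * n / s) * l powr \<nu> * mass h s (dil a l 1) powr (q / s))"
    using near_const_geometric[OF \<mu>0[unfolded \<mu>_def], of k]
    by (simp only: B_def x_def \<mu>_def mult_ac)
  also have "2 powr (q - q * n / s) * l powr \<nu> * mass h s (dil a l 1) powr (q / s) = aterm h s a l 1 powr q * l ^ CARD('n)"
    using aterm_powr[OF l0 s_pos q_pos, of h a 1] by (simp add: n_def \<nu>_def mult_ac)
  also have "real k * (q - \<mu>) = real k * q * n * max (1/s - 1/q) 0"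
    using decay_rate_gap by (simp add: \<mu>_def n_def mult_ac)
  finally show ?thesis by (simp add: S_def f_def n_def mult_ac)
qed

text \<open>The weights gamma_k 2^(k n e) of Jensen's inequality, summed up to any M and multiplied
  by A_1(Q), are bounded by 2^(n e) bar_a(Q): they occur in the series defining bar_gamma_1.\<close>
lemma near_weight_bound:
  assumes \<gamma>0: "\<And>k. 0 \<le> \<gamma> k" and l0: "0 < l"
    and A: "aQ (gbar C CARD('n) s q \<gamma>) h s a l = ennreal A" "0 \<le> A"
  shows "(\<Sum>k\<le>M. \<gamma> k * 2 powr (real k * real CARD('n) * max (1/s - 1/q) 0)) * aterm h s a l 1
     \<le> 2 powr (real CARD('n) * max (1/s - 1/q) 0) * A"
proof -
  define e where "e = real CARD('n) * max (1/s - 1/q) 0"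
  define W where "W = (\<Sum>k\<le>M. \<gamma> k * 2 powr (real k * real CARD('n) * max (1/s - 1/q) 0))"
  have W0: "0 \<le> W" unfolding W_def using \<gamma>0 by (intro sum_nonneg) auto
  have "ennreal W = (\<Sum>k\<le>M. ennreal (\<gamma> k * 2 powr (real k * real CARD('n) * max (1/s - 1/q) 0)))"
    unfolding W_def using \<gamma>0 by (intro sum_ennreal[symmetric]) auto
  then have "ennreal (2 powr (- e) * W) = ennreal (2 powr (- e)) * (\<Sum>k\<le>M. ennreal (\<gamma> k * 2 powr (real k * real CARD('n) * max (1/s - 1/q) 0)))"
    using W0 by (simp only: ennreal_mult powr_ge_zero)
  also have "\<dots> \<le> ennreal (2 powr (- e)) * (\<Sum>k. ennreal (\<gamma> (k + (1 - 1)) * 2 powr (real (k + (1 - 1)) * real CARD('n) * max (1/s - 1/q) 0)))"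
    by (intro mult_left_mono) (auto intro!: sum_le_suminf)
  also have "\<dots> = gbar C CARD('n) s q \<gamma> 1"
    by (simp add: gbar_def e_def)
  finally have "ennreal (2 powr (- e) * W) * ennreal (aterm h s a l 1) \<le> gbar C CARD('n) s q \<gamma> 1 * ennreal (aterm h s a l 1)"
    by (rule mult_right_mono) simp
  also have "\<dots> \<le> ennreal A"
    unfolding A(1)[symmetric] aQ_eq[OF l0] by (rule ennreal_le_suminf_term)
  finally have "2 powr (- e) * W * aterm h s a l 1 \<le> A"
    using W0 A(2) by (simp flip: ennreal_mult)
  then have "2 powr e * (2 powr (- e) * W * aterm h s a l 1) \<le> 2 powr e * A"
    by (intro mult_left_mono) auto
  then show ?thesis by (simp add: W_def e_def powr_minus field_simps)
qed

text \<open>The near parts of a(Q'), for all Q' in a finite family: Jensen's inequality with the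
  weights gamma_k 2^(k n e), exchange of the sums over cubes and over k, and the bound for
  each fixed k.\<close>
lemma near_part_bound:
  fixes a :: "real^'n"
  assumes \<gamma>0: "\<And>k. 0 \<le> \<gamma> k" and l0: "0 < l" and fF: "finite F"
    and F: "\<And>P. P \<in> F \<Longrightarrow> 0 < snd P \<and> cube (fst P) (snd P) \<subseteq> cube a l"
    and disj: "\<And>P P'. P \<in> F \<Longrightarrow> P' \<in> F \<Longrightarrow> P \<noteq> P' \<Longrightarrow>
                 cube (fst P) (snd P) \<inter> cube (fst P') (snd P') = {}"
    and A: "aQ (gbar C CARD('n) s q \<gamma>) h s a l = ennreal A" "0 \<le> A"
  shows "(\<Sum>P\<in>F. (\<Sum>k\<le>dyadic_scale l (snd P). \<gamma> k * aterm h s (fst P) (snd P) k) powr q * snd P ^ CARD('n))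
     \<le> near_const (real CARD('n)) s q * (2 powr (real CARD('n) * max (1/s - 1/q) 0) * A) powr q * l ^ CARD('n)"
proof -
  define n where "n = real CARD('n)"
  define e where "e = max (1/s - 1/q) (0::real)"
  define sc where "sc (P :: (real^'n) \<times> real) = dyadic_scale l (snd P)" for P
  define M where "M = (\<Sum>P\<in>F. sc P)"
  define t where "t = n * e"
  define w where "w k = \<gamma> k * 2 powr (real k * t)" for k
  define v where "v k = w k * 2 powr (- (real k * q * t))" for k
  define W where "W = (\<Sum>k\<le>M. w k)"
  define K where "K = near_const n s q"
  define A1 where "A1 = aterm h s a l 1"
  define T where "T P k = aterm h s (fst P) (snd P) k powr q * snd P ^ CARD('n)" for P k
  have w0: "0 \<le> w k" for k using \<gamma>0 by (simp add: w_def)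
  have v0: "0 \<le> v k" for k using w0 by (simp add: v_def)
  have W0: "0 \<le> W" unfolding W_def using w0 by (intro sum_nonneg) auto
  have K0: "0 \<le> K" unfolding K_def n_def by (rule near_const_nonneg)
  have scM: "sc P \<le> M" if "P \<in> F" for P
    unfolding M_def using that fF by (intro member_le_sum) auto
  have jensen: "(\<Sum>k\<le>sc P. \<gamma> k * aterm h s (fst P) (snd P) k) powr q
      \<le> W powr (q - 1) * (\<Sum>k\<le>sc P. v k * aterm h s (fst P) (snd P) k powr q)" if P: "P \<in> F" for P
  proof -
    have "(\<Sum>k\<le>sc P. w k) \<le> W" unfolding W_def using scM[OF P] w0 by (intro sum_mono2) auto
    then show ?thesis
      unfolding v_def w_def using \<gamma>0 q_ge_1 by (intro power_mean_exp_weights) auto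
  qed
  have swap: "(\<Sum>P\<in>F. \<Sum>k\<le>sc P. v k * T P k) = (\<Sum>k\<le>M. v k * (\<Sum>P\<in>{P\<in>F. k \<le> sc P}. T P k))"
    using sum_swap_atMost[OF fF scM] by (simp add: sum_distrib_left)
  have "(\<Sum>P\<in>F. (\<Sum>k\<le>sc P. \<gamma> k * aterm h s (fst P) (snd P) k) powr q * snd P ^ CARD('n))
      \<le> (\<Sum>P\<in>F. W powr (q - 1) * (\<Sum>k\<le>sc P. v k * aterm h s (fst P) (snd P) k powr q) * snd P ^ CARD('n))"
    using jensen F by (intro sum_mono mult_right_mono) (auto simp: less_imp_le)
  also have "\<dots> = W powr (q - 1) * (\<Sum>P\<in>F. \<Sum>k\<le>sc P. v k * T P k)"
    by (simp add: T_def sum_distrib_left sum_distrib_right mult_ac)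
  also have "\<dots> = W powr (q - 1) * (\<Sum>k\<le>M. v k * (\<Sum>P\<in>{P\<in>F. k \<le> sc P}. T P k))"
    by (simp only: swap)
  also have "\<dots> \<le> W powr (q - 1) * (\<Sum>k\<le>M. v k * (K * 2 powr (real k * q * t) * A1 powr q * l ^ CARD('n)))"
    using scale_sum_bound[OF l0 fF F disj] v0
    by (intro mult_left_mono sum_mono) (simp_all add: T_def sc_def K_def A1_def n_def e_def t_def mult.assoc)
  also have "\<dots> = W powr (q - 1) * W * (K * A1 powr q * l ^ CARD('n))"
  proof -
    have "v k * (K * 2 powr (real k * q * t) * A1 powr q * l ^ CARD('n)) = w k * (K * A1 powr q * l ^ CARD('n))" for k
      by (simp add: v_def mult_ac flip: powr_add)
    then have "(\<Sum>k\<le>M. v k * (K * 2 powr (real k * q * t) * A1 powr q * l ^ CARD('n)))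
        = (\<Sum>k\<le>M. w k * (K * A1 powr q * l ^ CARD('n)))"
      by (rule sum.cong[OF refl])
    also have "\<dots> = W * (K * A1 powr q * l ^ CARD('n))"
      by (simp add: W_def sum_distrib_right)
    finally have "(\<Sum>k\<le>M. v k * (K * 2 powr (real k * q * t) * A1 powr q * l ^ CARD('n)))
        = W * (K * A1 powr q * l ^ CARD('n))" .
    then show ?thesis by (simp only: mult.assoc)
  qed
  also have "W powr (q - 1) * W = W powr q"
    using W0 q_ge_1 by (cases "W = 0") (simp_all add: powr_diff)
  also have "W powr q * (K * A1 powr q * l ^ CARD('n)) = K * (W * A1) powr q * l ^ CARD('n)"
    by (simp add: A1_def powr_mult mult_ac)
  also have "\<dots> \<le> K * (2 powr t * A) powr q * l ^ CARD('n)"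
    using near_weight_bound[OF \<gamma>0 l0 A, of M] K0 W0 l0 q_pos
    by (intro mult_right_mono mult_left_mono powr_mono2) (auto simp: W_def w_def A1_def n_def e_def t_def mult.assoc)
  finally show ?thesis by (simp add: K_def n_def e_def t_def sc_def)
qed

subsection \<open>Finite families of cubes\<close>

text \<open>Real-valued form of the estimate when bar_a(Q) = A is finite: by the splitting, every
  a(Q') is at most its near part plus c A, and (x + y)^q <= 2^q (x^q + y^q).\<close>
lemma finite_family_bound_real:
  fixes a :: "real^'n"
  assumes \<gamma>0: "\<And>k. 0 \<le> \<gamma> k" and l0: "0 < l" and fF: "finite F"
    and F: "\<And>P. P \<in> F \<Longrightarrow> 0 < snd P \<and> cube (fst P) (snd P) \<subseteq> cube a l"
    and disj: "\<And>P P'. P \<in> F \<Longrightarrow> P' \<in> F \<Longrightarrow> P \<noteq> P' \<Longrightarrow>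
                 cube (fst P) (snd P) \<inter> cube (fst P') (snd P') = {}"
    and A: "aQ (gbar C CARD('n) s q \<gamma>) h s a l = ennreal A" "0 \<le> A"
  defines "\<sigma> P \<equiv> \<Sum>k\<le>dyadic_scale l (snd P). \<gamma> k * aterm h s (fst P) (snd P) k"
    and "c \<equiv> far_const (real CARD('n)) s q"
  shows "(\<Sum>P\<in>F. (\<sigma> P + c * A) powr q * snd P ^ CARD('n)) \<le> total_const (real CARD('n)) s q * A powr q * l ^ CARD('n)"
proof -
  define n where "n = real CARD('n)"
  define e where "e = max (1/s - 1/q) (0::real)"
  define K where "K = near_const n s q"
  have \<sigma>0: "0 \<le> \<sigma> P" for P unfolding \<sigma>_def using \<gamma>0 by (intro sum_nonneg) auto
  have c0: "0 \<le> c" by (simp add: c_def far_const_def)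
  have "(\<Sum>P\<in>F. (\<sigma> P + c * A) powr q * snd P ^ CARD('n))
      \<le> (\<Sum>P\<in>F. 2 powr q * (\<sigma> P powr q + (c * A) powr q) * snd P ^ CARD('n))"
    using F \<sigma>0 c0 A q_ge_1 by (intro sum_mono mult_right_mono powr_add_le) (auto simp: less_imp_le)
  also have "\<dots> = 2 powr q * ((\<Sum>P\<in>F. \<sigma> P powr q * snd P ^ CARD('n))
                 + (c * A) powr q * (\<Sum>P\<in>F. snd P ^ CARD('n)))"
    by (simp add: sum_distrib_left sum_distrib_right sum.distrib algebra_simps)
  also have "\<dots> \<le> 2 powr q * (K * (2 powr (n * e) * A) powr q * l ^ CARD('n) + (c * A) powr q * l ^ CARD('n))"
  proof (intro mult_left_mono add_mono)
    show "(\<Sum>P\<in>F. \<sigma> P powr q * snd P ^ CARD('n)) \<le> K * (2 powr (n * e) * A) powr q * l ^ CARD('n)"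
      unfolding \<sigma>_def K_def n_def e_def by (rule near_part_bound[OF \<gamma>0 l0 fF F disj A])
    show "(\<Sum>P\<in>F. snd P ^ CARD('n)) \<le> l ^ CARD('n)"
      using F disj l0 by (intro disjoint_subcubes_volume[OF fF]) auto
  qed auto
  also have "\<dots> = 2 powr q * (K * 2 powr (q * (n * e)) + c powr q) * A powr q * l ^ CARD('n)"
    using A c0 by (simp add: powr_mult powr_powr algebra_simps)
  also have "\<dots> \<le> total_const n s q * A powr q * l ^ CARD('n)"
    using l0 A by (intro mult_right_mono) (auto simp: total_const_def K_def c_def e_def n_def)
  finally show ?thesis by (simp add: n_def)
qed

lemma subcube_term_le:
  assumes \<gamma>0: "\<And>k. 0 \<le> \<gamma> k" and r0: "0 < r" and sub: "cube b r \<subseteq> cube a l"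
    and A: "aQ (gbar C CARD('n) s q \<gamma>) h s a l = ennreal A" "0 \<le> A"
  shows "epow (aQ (\<lambda>k. ennreal (\<gamma> k)) h s b r) q * ennreal (measure lebesgue (cube b r))
    \<le> ennreal (((\<Sum>k\<le>dyadic_scale l r. \<gamma> k * aterm h s b r k) + far_const (real CARD('n)) s q * A) powr q
               * r ^ CARD('n))"
proof -
  define \<sigma> where "\<sigma> = (\<Sum>k\<le>dyadic_scale l r. \<gamma> k * aterm h s b r k)"
  define c where "c = far_const (real CARD('n)) s q"
  have c0: "0 \<le> c" by (simp add: c_def far_const_def)
  have \<sigma>0: "0 \<le> \<sigma>" unfolding \<sigma>_def using \<gamma>0 by (intro sum_nonneg) auto
  have "aQ (\<lambda>k. ennreal (\<gamma> k)) h s b r \<le> ennreal \<sigma> + ennreal c * ennreal A"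
    using aQ_far_split[where \<gamma>=\<gamma> and C=C, OF \<gamma>0 r0 sub] A by (simp add: \<sigma>_def c_def)
  also have "\<dots> = ennreal (\<sigma> + c * A)"
    using A \<sigma>0 c0 by (simp add: ennreal_mult)
  finally have "epow (aQ (\<lambda>k. ennreal (\<gamma> k)) h s b r) q \<le> ennreal ((\<sigma> + c * A) powr q)"
    by (rule epow_le) (use \<sigma>0 c0 A q_pos in auto)
  then show ?thesis
    using r0 by (simp add: measure_cube \<sigma>_def c_def ennreal_mult mult_right_mono)
qed

lemma finite_family_bound:
  fixes a :: "real^'n"
  assumes \<gamma>0: "\<And>k. 0 \<le> \<gamma> k" and l0: "0 < l" and fF: "finite F"
    and F: "\<And>P. P \<in> F \<Longrightarrow> 0 < snd P \<and> cube (fst P) (snd P) \<subseteq> cube a l"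
    and disj: "\<And>P P'. P \<in> F \<Longrightarrow> P' \<in> F \<Longrightarrow> P \<noteq> P' \<Longrightarrow>
                 cube (fst P) (snd P) \<inter> cube (fst P') (snd P') = {}"
  shows "(\<Sum>P\<in>F. epow (aQ (\<lambda>k. ennreal (\<gamma> k)) h s (fst P) (snd P)) q
                  * ennreal (measure lebesgue (cube (fst P) (snd P))))
     \<le> ennreal (total_const (real CARD('n)) s q) * epow (aQ (gbar C CARD('n) s q \<gamma>) h s a l) q
         * ennreal (measure lebesgue (cube a l))"
proof -
  define K where "K = total_const (real CARD('n)) s q"
  define c where "c = far_const (real CARD('n)) s q"
  define \<sigma> where "\<sigma> P = (\<Sum>k\<le>dyadic_scale l (snd P). \<gamma> k * aterm h s (fst P) (snd P) k)" for P
  have K1: "1 \<le> K" by (simp add: K_def total_const_def)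
  have vol: "measure lebesgue (cube b r) = r ^ CARD('n)" if "0 < r" for b :: "real^'n" and r
    using that by (simp add: measure_cube)
  show ?thesis
  proof (cases "aQ (gbar C CARD('n) s q \<gamma>) h s a l" rule: ennreal_cases)
    case top
    then show ?thesis using K1 l0 by (simp add: K_def epow_def vol ennreal_mult_eq_top_iff)
  next
    case (real A)
    have "epow (aQ (\<lambda>k. ennreal (\<gamma> k)) h s (fst P) (snd P)) q * ennreal (measure lebesgue (cube (fst P) (snd P)))
        \<le> ennreal ((\<sigma> P + c * A) powr q * snd P ^ CARD('n))" if P: "P \<in> F" for P
      unfolding \<sigma>_def c_def using F[OF P] real by (intro subcube_term_le[OF \<gamma>0]) auto
    then have "(\<Sum>P\<in>F. epow (aQ (\<lambda>k. ennreal (\<gamma> k)) h s (fst P) (snd P)) q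
                  * ennreal (measure lebesgue (cube (fst P) (snd P))))
        \<le> (\<Sum>P\<in>F. ennreal ((\<sigma> P + c * A) powr q * snd P ^ CARD('n)))"
      by (rule sum_mono)
    also have "\<dots> = ennreal (\<Sum>P\<in>F. (\<sigma> P + c * A) powr q * snd P ^ CARD('n))"
      using F by (intro sum_ennreal) (auto simp: less_imp_le)
    also have "\<dots> \<le> ennreal (K * A powr q * l ^ CARD('n))"
      unfolding \<sigma>_def c_def K_def
      by (intro ennreal_leI finite_family_bound_real[OF \<gamma>0 l0 fF F disj]) (use real in auto)
    also have "\<dots> = ennreal K * epow (ennreal A) q * ennreal (measure lebesgue (cube a l))"
      using real K1 l0 by (simp add: epow_ennreal vol ennreal_mult)
    finally show ?thesis using real by (simp add: K_def)
  qed
qed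
end

end

text \<open>With C = total_const + 1 >= 1 we have total_const <= C powr q, so the estimate for
  finite families holds with C powr q; the infinite sum is the supremum of the finite ones.\<close>
theorem mainTheorem11:
  fixes h :: "real^'n \<Rightarrow> real" and \<gamma> :: "nat \<Rightarrow> real" and s q :: real
  assumes s1: "1 \<le> s" and sn: "s < real CARD('n)"
    and h_nonneg: "\<And>x. 0 \<le> h x"
    and h_meas: "h \<in> borel_measurable lebesgue"
    and h_loc: "\<And>K. compact K \<Longrightarrow> set_integrable lebesgue K (\<lambda>x. h x powr s)"
    and \<gamma>_nonneg: "\<And>k. 0 \<le> \<gamma> k"
    and q1: "1 \<le> q" and qs: "q < s * real CARD('n) / (real CARD('n) - s)"
  shows "\<exists>C>0. \<forall>a l F. 0 < l \<longrightarrow>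
           (\<forall>P\<in>F. 0 < snd P \<and> cube (fst P) (snd P) \<subseteq> cube a l) \<longrightarrow>
           (\<forall>P\<in>F. \<forall>P'\<in>F. P \<noteq> P' \<longrightarrow> cube (fst P) (snd P) \<inter> cube (fst P') (snd P') = {}) \<longrightarrow>
           (\<Sum>\<^sub>\<infinity>P\<in>F. epow (aQ (\<lambda>k. ennreal (\<gamma> k)) h s (fst P) (snd P)) q
                        * ennreal (measure lebesgue (cube (fst P) (snd P))))
           \<le> ennreal (C powr q) * epow (aQ (gbar C CARD('n) s q \<gamma>) h s a l) q
                        * ennreal (measure lebesgue (cube a l))"
proof -
  define K where "K = total_const (real CARD('n)) s q"
  define C where "C = K + 1"
  have s0: "0 < s" using s1 by simp
  have K1: "1 \<le> K" by (simp add: K_def total_const_def)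
  have "K \<le> C powr 1" using K1 by (simp add: C_def)
  also have "\<dots> \<le> C powr q" using q1 K1 by (intro powr_mono) (auto simp: C_def)
  finally have KC: "K \<le> C powr q" .
  show ?thesis
  proof (intro exI[of _ C] conjI allI impI infsum_le_finite_sums nonneg_summable_on_complete)
    fix a :: "real^'n" and l :: real and F G :: "((real^'n) \<times> real) set"
    assume l0: "0 < l" and F: "\<forall>P\<in>F. 0 < snd P \<and> cube (fst P) (snd P) \<subseteq> cube a l"
      and disj: "\<forall>P\<in>F. \<forall>P'\<in>F. P \<noteq> P' \<longrightarrow> cube (fst P) (snd P) \<inter> cube (fst P') (snd P') = {}"
      and G: "finite G" "G \<subseteq> F"
    have "(\<Sum>P\<in>G. epow (aQ (\<lambda>k. ennreal (\<gamma> k)) h s (fst P) (snd P)) q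
                    * ennreal (measure lebesgue (cube (fst P) (snd P))))
        \<le> ennreal K * epow (aQ (gbar C CARD('n) s q \<gamma>) h s a l) q * ennreal (measure lebesgue (cube a l))"
      unfolding K_def
      by (rule finite_family_bound[OF h_nonneg h_meas h_loc s0 sn q1 qs \<gamma>_nonneg l0 G(1)])
         (use F disj G in blast)+
    also have "\<dots> \<le> ennreal (C powr q) * epow (aQ (gbar C CARD('n) s q \<gamma>) h s a l) q
                    * ennreal (measure lebesgue (cube a l))"
      using KC by (intro mult_right_mono ennreal_leI) auto
    finally show "(\<Sum>P\<in>G. epow (aQ (\<lambda>k. ennreal (\<gamma> k)) h s (fst P) (snd P)) q
                    * ennreal (measure lebesgue (cube (fst P) (snd P))))
        \<le> ennreal (C powr q) * epow (aQ (gbar C CARD('n) s q \<gamma>) h s a l) q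
                    * ennreal (measure lebesgue (cube a l))" .
  qed (use K1 in \<open>simp_all add: C_def\<close>)
qed

end
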